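(* Let $\kappa$ be an infinite cardinal and let $\langle\kappa\times\kappa^{++},\unlhd\rangle$ be a $(\kappa,\kappa^{++})$-admissible poset. For $(\alpha,\beta)\in\kappa\times\kappa^{++}$ put $C(\alpha,\beta)=\{(\gamma,\delta)\in\kappa\times\kappa^{++}:(\gamma,\delta)\unlhd(\alpha,\beta)\}$, and give $X=\kappa\times\kappa^{++}$ the topology generated by the subbase consisting of all sets $C(\alpha,\beta)$ and their complements $X\setminus C(\alpha,\beta)$. Then $X$ is Hausdorff, every $C(\alpha,\beta)$ is compact (so $X$ is a locally compact Hausdorff space), and $I_\beta(X)=\kappa\times\{\beta\}$ for every $\beta<\kappa^{++}$. In particular $X$ is a locally compact Hausdorff scattered space of height $\kappa^{++}$ whose cardinal sequence is constantly $\kappa$.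
   Context: $(\kappa,\kappa^{++})$-admissible: $\unlhd$ is a reflexive, transitive, antisymmetric relation on $\kappa\times\kappa^{++}$ such that (A) $(\alpha,\beta)\unlhd(\alpha',\beta')$ with $(\alpha,\beta)\neq(\alpha',\beta')$ implies $\beta<\beta'$; (B) for every $\beta<\kappa^{++}$ and $(\alpha',\beta')$ with $\beta<\beta'$ there are infinitely many $\alpha$ with $(\alpha,\beta)\unlhd(\alpha',\beta')$; (C) for any two points $x_0,x_1$ there is a finite set $b$ of points each $\unlhd$-below both $x_0,x_1$ such that every point $\unlhd$-below both $x_0,x_1$ is $\unlhd$-below some element of $b$. Cantor–Bendixson levels: $I_0(X)$ is the set of isolated points of $X$, and $I_\beta(X)$ is the set of isolated points of the subspace $X\setminus\bigcup_{\alpha<\beta}I_\alpha(X)$. $X$ is scattered if $X=\bigcup_{\beta<\lambda}I_\beta(X)$ where $\lambda$ is the least ordinal with $I_\lambda(X)=\emptyset$ (the height); the cardinal sequence is $\langle|I_\beta(X)|:\beta<\lambda\rangle$. *)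

theory Defs
  imports "HOL-Analysis.Analysis"
begin

text \<open>Points of \<kappa> \<times> kappa^{++} are pairs (\<alpha>,\<beta>) with \<alpha> \<in> K (a set of size \<kappa>) and
  \<beta> \<in> Field L, where L is a well-order of order type kappa^{++} (strict order: (\<beta>,\<beta>') \<in> L, \<beta> \<noteq> \<beta>').\<close>

definition strictL :: "'b rel \<Rightarrow> 'b \<Rightarrow> 'b \<Rightarrow> bool" where
  "strictL L \<beta> \<beta>' \<longleftrightarrow> (\<beta>, \<beta>') \<in> L \<and> \<beta> \<noteq> \<beta>'"

definition admissible ::
  "'a set \<Rightarrow> 'b rel \<Rightarrow> (('a \<times> 'b) \<Rightarrow> ('a \<times> 'b) \<Rightarrow> bool) \<Rightarrow> bool" where
  "admissible K L le \<longleftrightarrow>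
     (\<forall>x y. le x y \<longrightarrow> x \<in> K \<times> Field L \<and> y \<in> K \<times> Field L) \<and>
     (\<forall>x \<in> K \<times> Field L. le x x) \<and>
     (\<forall>x y z. le x y \<longrightarrow> le y z \<longrightarrow> le x z) \<and>
     (\<forall>x y. le x y \<longrightarrow> le y x \<longrightarrow> x = y) \<and>
     (\<forall>x y. le x y \<longrightarrow> x \<noteq> y \<longrightarrow> strictL L (snd x) (snd y)) \<and>
     (\<forall>\<beta> \<in> Field L. \<forall>\<alpha>' \<in> K. \<forall>\<beta>' \<in> Field L. strictL L \<beta> \<beta>' \<longrightarrow>
        infinite {\<alpha> \<in> K. le (\<alpha>, \<beta>) (\<alpha>', \<beta>')}) \<and>
     (\<forall>x0 \<in> K \<times> Field L. \<forall>x1 \<in> K \<times> Field L. \<exists>b. finite b \<and> b \<subseteq> K \<times> Field L \<and>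
        (\<forall>y \<in> b. le y x0 \<and> le y x1) \<and>
        (\<forall>z \<in> K \<times> Field L. le z x0 \<and> le z x1 \<longrightarrow> (\<exists>y \<in> b. le z y)))"

definition Cone :: "'a set \<Rightarrow> 'b rel \<Rightarrow> (('a \<times> 'b) \<Rightarrow> ('a \<times> 'b) \<Rightarrow> bool) \<Rightarrow> 'a \<times> 'b \<Rightarrow> ('a \<times> 'b) set" where
  "Cone K L le x = {y \<in> K \<times> Field L. le y x}"

definition admTop :: "'a set \<Rightarrow> 'b rel \<Rightarrow> (('a \<times> 'b) \<Rightarrow> ('a \<times> 'b) \<Rightarrow> bool) \<Rightarrow> ('a \<times> 'b) topology" where
  "admTop K L le = topology_generated_by
     ((\<lambda>x. Cone K L le x) ` (K \<times> Field L) \<union> (\<lambda>x. (K \<times> Field L) - Cone K L le x) ` (K \<times> Field L))"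

definition isolated_pts :: "'x topology \<Rightarrow> 'x set \<Rightarrow> 'x set" where
  "isolated_pts T Y = {x \<in> Y. \<exists>U. openin T U \<and> U \<inter> Y = {x}}"

text \<open>Cantor--Bendixson levels I_\<beta>(T), indexed by the well-order L, defined by
  well-founded recursion along the strict part of L:
  I_\<beta> = isolated points of topspace T - \<Union>_{\<alpha> <_L \<beta>} I_\<alpha>.\<close>
definition CB_level :: "'x topology \<Rightarrow> 'b rel \<Rightarrow> 'b \<Rightarrow> 'x set" where
  "CB_level T L = wfrec (L - Id)
     (\<lambda>f \<beta>. isolated_pts T (topspace T - \<Union> (f ` underS L \<beta>)))"

end

theory Submission
  imports Defs
begin

text \<open>The cones \<open>C x\<close> minus finitely many cones of points strictly below \<open>x\<close> form a
  neighbourhood base at \<open>x\<close>; this uses condition (C), which makes the complement of a cone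
  near \<open>x\<close> look like such a difference. Since the removed cones lie on strictly lower levels,
  compactness of \<open>C x\<close> follows by well-founded induction on the level of \<open>x\<close>, and in the
  subspace of points of level \<open>\<ge> \<beta>\<close> a point of level \<open>\<beta>\<close> is isolated by its cone. A point of
  level \<open>> \<beta>\<close> is not isolated there: a basic neighbourhood removes only finitely many points on
  any level, while by (B) the cone contains infinitely many points on a level above those of
  the removed cones and not below \<open>\<beta>\<close>.\<close>

lemma (in wo_rel) finite_has_greatest:
  assumes "finite D" "D \<noteq> {}" "D \<subseteq> Field r"
  shows "\<exists>d\<in>D. \<forall>e\<in>D. (e, d) \<in> r"
  using assms
proof (induction D rule: finite_ne_induct)
  case (singleton d)
  then show ?case using REFL by (simp add: refl_on_def)
next
  case (insert e D)
  then obtain d where d: "d \<in> D" "\<forall>e'\<in>D. (e', d) \<in> r" by auto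
  have "e \<in> Field r" "d \<in> Field r" using insert.prems d(1) by auto
  then have m: "(e, max2 e d) \<in> r" "(d, max2 e d) \<in> r" "max2 e d \<in> {e, d}"
    using max2_greater_among by auto
  have "(e', max2 e d) \<in> r" if "e' \<in> D" for e'
    using d(2) that m(2) TRANS by (meson transD)
  then show ?case
    using m(1,3) d(1) by (intro bexI[of _ "max2 e d"]) auto
qed

lemma (in wo_rel) mem_underS_iff:
  assumes "a \<in> Field r" "b \<in> Field r"
  shows "b \<in> underS a \<longleftrightarrow> (a, b) \<notin> r"
proof
  assume "b \<in> underS a"
  then show "(a, b) \<notin> r"
    using ANTISYM by (auto simp: underS_def dest: antisymD)
next
  assume "(a, b) \<notin> r"
  then show "b \<in> underS a"
    using in_notinI[OF _ assms] by (auto simp: underS_def)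
qed

lemma (in wo_rel) CB_level_unfold:
  "CB_level T r \<beta> = isolated_pts T (topspace T - \<Union> (CB_level T r ` underS \<beta>))"
proof -
  have "cut (CB_level T r) (r - Id) \<beta> ` underS \<beta> = CB_level T r ` underS \<beta>"
    by (rule image_cong) (auto simp: cut_apply underS_def)
  then show ?thesis
    unfolding CB_level_def by (subst wfrec[OF WF]) simp
qed

locale admissible_poset = wo_rel L
  for L :: "'b rel" +
  fixes K :: "'a set" and le :: "'a \<times> 'b \<Rightarrow> 'a \<times> 'b \<Rightarrow> bool"
  assumes le_carrier: "le x y \<Longrightarrow> x \<in> K \<times> Field L \<and> y \<in> K \<times> Field L"
    and le_refl: "x \<in> K \<times> Field L \<Longrightarrow> le x x"
    and le_trans: "le x y \<Longrightarrow> le y z \<Longrightarrow> le x z"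
    and le_antisym: "le x y \<Longrightarrow> le y x \<Longrightarrow> x = y"
    and le_level_less: "le x y \<Longrightarrow> x \<noteq> y \<Longrightarrow> (snd x, snd y) \<in> L - Id"
    and infinite_column_below: "\<beta> \<in> Field L \<Longrightarrow> \<alpha>' \<in> K \<Longrightarrow> (\<beta>, \<beta>') \<in> L - Id
      \<Longrightarrow> infinite {\<alpha> \<in> K. le (\<alpha>, \<beta>) (\<alpha>', \<beta>')}"
    and common_lower_bounds_finitely_generated: "x \<in> K \<times> Field L \<Longrightarrow> y \<in> K \<times> Field L
      \<Longrightarrow> \<exists>B. finite B \<and> (\<forall>c\<in>B. le c x \<and> le c y) \<and> (\<forall>z. le z x \<longrightarrow> le z y \<longrightarrow> (\<exists>c\<in>B. le z c))"

lemma admissible_poset_if_admissible: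
  assumes "Well_order L" "admissible K L le"
  shows "admissible_poset L K le"
proof -
  let ?X = "K \<times> Field L"
  have carrier: "\<forall>x y. le x y \<longrightarrow> x \<in> ?X \<and> y \<in> ?X"
    and refl: "\<forall>x \<in> ?X. le x x"
    and trans: "\<forall>x y z. le x y \<longrightarrow> le y z \<longrightarrow> le x z"
    and antisym: "\<forall>x y. le x y \<longrightarrow> le y x \<longrightarrow> x = y"
    and level: "\<forall>x y. le x y \<longrightarrow> x \<noteq> y \<longrightarrow> strictL L (snd x) (snd y)"
    and column: "\<forall>\<beta> \<in> Field L. \<forall>\<alpha>' \<in> K. \<forall>\<beta>' \<in> Field L. strictL L \<beta> \<beta>' \<longrightarrow>
        infinite {\<alpha> \<in> K. le (\<alpha>, \<beta>) (\<alpha>', \<beta>')}"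
    and bounds: "\<forall>x0 \<in> ?X. \<forall>x1 \<in> ?X. \<exists>b. finite b \<and> b \<subseteq> ?X \<and>
        (\<forall>y \<in> b. le y x0 \<and> le y x1) \<and> (\<forall>z \<in> ?X. le z x0 \<and> le z x1 \<longrightarrow> (\<exists>y \<in> b. le z y))"
    using assms(2) unfolding admissible_def by - (elim conjE, assumption)+
  show ?thesis
  proof unfold_locales
    show "Well_order L" by (fact assms(1))
  next
    fix x y assume "le x y" then show "x \<in> ?X \<and> y \<in> ?X" using carrier by blast
  next
    fix x assume "x \<in> ?X" then show "le x x" using refl by blast
  next
    fix x y z assume "le x y" "le y z" then show "le x z" using trans by blast
  next
    fix x y assume "le x y" "le y x" then show "x = y" using antisym by blast
  next
    fix x y assume "le x y" "x \<noteq> y" then show "(snd x, snd y) \<in> L - Id"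
      using level unfolding strictL_def by blast
  next
    fix \<beta> \<alpha>' \<beta>' assume \<beta>: "\<beta> \<in> Field L" and \<alpha>': "\<alpha>' \<in> K" and less: "(\<beta>, \<beta>') \<in> L - Id"
    have "\<beta>' \<in> Field L" "strictL L \<beta> \<beta>'"
      using less by (auto simp: strictL_def intro: FieldI2)
    then show "infinite {\<alpha> \<in> K. le (\<alpha>, \<beta>) (\<alpha>', \<beta>')}"
      using column[rule_format, OF \<beta> \<alpha>'] by blast
  next
    fix x y assume "x \<in> ?X" "y \<in> ?X"
    from bounds[rule_format, OF this] obtain b where b: "finite b" "\<forall>c\<in>b. le c x \<and> le c y"
      "\<forall>z \<in> ?X. le z x \<and> le z y \<longrightarrow> (\<exists>c \<in> b. le z c)"
      by blast
    have "z \<in> ?X" if "le z x" for z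
      using carrier that by blast
    with b show "\<exists>B. finite B \<and> (\<forall>c\<in>B. le c x \<and> le c y) \<and> (\<forall>z. le z x \<longrightarrow> le z y \<longrightarrow> (\<exists>c\<in>B. le z c))"
      by (intro exI[of _ b]) blast
  qed
qed

context admissible_poset
begin

abbreviation "X \<equiv> K \<times> Field L"
abbreviation "C \<equiv> Cone K L le"
abbreviation "T \<equiv> admTop K L le"

lemma le_level_eq:
  assumes "le x y" "(snd y, snd x) \<in> L"
  shows "x = y"
  using le_level_less[OF assms(1)] assms(2) ANTISYM by (auto simp: antisym_def)

lemma mem_Cone_iff [simp]: "z \<in> C x \<longleftrightarrow> le z x"
  unfolding Cone_def using le_carrier by blast

lemma Cone_subset: "C x \<subseteq> X"
  unfolding Cone_def by blast

lemma Cone_mono: "le x y \<Longrightarrow> C x \<subseteq> C y"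
  unfolding subset_iff mem_Cone_iff by (blast intro: le_trans)

lemma topspace_admTop: "topspace T = X"
  unfolding admTop_def Cone_def by (auto intro: le_refl)

lemma openin_admTop_iff:
  "openin T U \<longleftrightarrow> generate_topology_on (C ` X \<union> (\<lambda>x. X - C x) ` X) U"
  unfolding admTop_def by (rule openin_topology_generated_by_iff)

lemma openin_Cone: "x \<in> X \<Longrightarrow> openin T (C x)"
  unfolding openin_admTop_iff by (rule generate_topology_on.Basis) blast

lemma openin_Cone_complement: "x \<in> X \<Longrightarrow> openin T (X - C x)"
  unfolding openin_admTop_iff by (rule generate_topology_on.Basis) blast

lemma Cone_complement_neighbourhood:
  assumes "y \<in> X" "x \<in> X - C y"
  obtains B where "finite B" "\<forall>b\<in>B. le b x \<and> b \<noteq> x" "C x - \<Union> (C ` B) \<subseteq> X - C y"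
proof -
  have x: "x \<in> X" and not_le: "\<not> le x y"
    using assms(2) by auto
  obtain B where B: "finite B" "\<forall>c\<in>B. le c x \<and> le c y"
    and gen: "\<forall>z. le z x \<longrightarrow> le z y \<longrightarrow> (\<exists>c\<in>B. le z c)"
    using common_lower_bounds_finitely_generated[OF x assms(1)] by blast
  have "\<forall>b\<in>B. le b x \<and> b \<noteq> x"
    using B(2) not_le by blast
  moreover have "C x - \<Union> (C ` B) \<subseteq> X - C y"
  proof
    fix z assume "z \<in> C x - \<Union> (C ` B)"
    then have "le z x" "\<forall>c\<in>B. \<not> le z c" by auto
    then show "z \<in> X - C y"
      using gen le_carrier[of z x] by auto
  qed
  ultimately show thesis
    using that B(1) by blast
qed

lemma open_neighbourhood_contains_punctured_Cone:
  assumes "openin T U" "x \<in> U"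
  obtains B where "finite B" "\<forall>b\<in>B. le b x \<and> b \<noteq> x" "C x - \<Union> (C ` B) \<subseteq> U"
proof -
  have "generate_topology_on (C ` X \<union> (\<lambda>x. X - C x) ` X) U"
    using assms(1) openin_admTop_iff by blast
  then have "\<exists>B. finite B \<and> (\<forall>b\<in>B. le b x \<and> b \<noteq> x) \<and> C x - \<Union> (C ` B) \<subseteq> U"
    using assms(2)
  proof (induction arbitrary: x rule: generate_topology_on.induct)
    case Empty
    then show ?case by simp
  next
    case (Int U V)
    obtain B1 where B1: "finite B1" "\<forall>b\<in>B1. le b x \<and> b \<noteq> x" "C x - \<Union> (C ` B1) \<subseteq> U"
      using Int.IH(1)[of x] Int.prems by blast
    obtain B2 where B2: "finite B2" "\<forall>b\<in>B2. le b x \<and> b \<noteq> x" "C x - \<Union> (C ` B2) \<subseteq> V"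
      using Int.IH(2)[of x] Int.prems by blast
    have "C x - \<Union> (C ` (B1 \<union> B2)) \<subseteq> U \<inter> V"
      using B1(3) B2(3) by blast
    then show ?case
      using B1(1,2) B2(1,2) by (intro exI[of _ "B1 \<union> B2"]) auto
  next
    case (UN \<U>)
    from UN.prems obtain U where U: "U \<in> \<U>" "x \<in> U" by blast
    obtain B where B: "finite B" "\<forall>b\<in>B. le b x \<and> b \<noteq> x" "C x - \<Union> (C ` B) \<subseteq> U"
      using UN.IH[OF U] by blast
    then show ?case
      using U(1) by (intro exI[of _ B]) blast
  next
    case (Basis S)
    then consider y where "y \<in> X" "S = C y" | y where "y \<in> X" "S = X - C y" by blast
    then show ?case
    proof cases
      case 1
      then have "C x \<subseteq> S"
        using Basis.prems Cone_mono by simp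
      then show ?thesis by (intro exI[of _ "{}"]) simp
    next
      case 2
      then have "x \<in> X - C y"
        using Basis.prems by simp
      then obtain B where "finite B" "\<forall>b\<in>B. le b x \<and> b \<noteq> x" "C x - \<Union> (C ` B) \<subseteq> X - C y"
        by (rule Cone_complement_neighbourhood[OF 2(1)])
      then show ?thesis
        using 2(2) by blast
    qed
  qed
  then show thesis using that by blast
qed

lemma Hausdorff_admTop: "Hausdorff_space T"
  unfolding Hausdorff_space_def topspace_admTop
proof (intro allI impI, elim conjE)
  have separate: "\<exists>U V. openin T U \<and> openin T V \<and> x \<in> U \<and> y \<in> V \<and> disjnt U V"
    if "x \<in> X" "y \<in> X" "\<not> le y x" for x y
    using that openin_Cone openin_Cone_complement le_refl
    by (intro exI[of _ "C x"] exI[of _ "X - C x"]) (auto simp: disjnt_def)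
  fix x y assume xy: "x \<in> X" "y \<in> X" "x \<noteq> y"
  then consider "\<not> le y x" | "\<not> le x y"
    using le_antisym by blast
  then show "\<exists>U V. openin T U \<and> openin T V \<and> x \<in> U \<and> y \<in> V \<and> disjnt U V"
  proof cases
    case 1
    then show ?thesis using separate xy by blast
  next
    case 2
    then obtain V U where "openin T V" "openin T U" "y \<in> V" "x \<in> U" "disjnt V U"
      using separate xy by blast
    then show ?thesis using disjnt_sym by blast
  qed
qed

lemma compactin_Cone: "x \<in> X \<Longrightarrow> compactin T (C x)"
  using wf_inv_image[OF WF, of snd]
proof (induction x rule: wf_induct_rule)
  case (less x)
  have finite_subcover: "\<exists>\<F>. finite \<F> \<and> \<F> \<subseteq> \<U> \<and> C x \<subseteq> \<Union> \<F>"
    if open_cover: "\<forall>U\<in>\<U>. openin T U" "C x \<subseteq> \<Union> \<U>" for \<U>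
  proof -
    have "x \<in> C x"
      using less.prems le_refl by simp
    then obtain V where V: "V \<in> \<U>" "x \<in> V"
      using open_cover(2) by blast
    obtain B where B: "finite B" "\<forall>b\<in>B. le b x \<and> b \<noteq> x" "C x - \<Union> (C ` B) \<subseteq> V"
      using open_neighbourhood_contains_punctured_Cone[of V x] open_cover(1) V by blast
    have "compactin T (C b)" if "b \<in> B" for b
      using less.IH[of b] le_level_less[of b x] le_carrier[of b x] B(2) that by simp
    then have "compactin T (\<Union> (C ` B))"
      using B(1) by (intro compactin_Union) auto
    moreover have "\<Union> (C ` B) \<subseteq> C x"
      using B(2) Cone_mono by blast
    ultimately have "\<exists>\<F>. finite \<F> \<and> \<F> \<subseteq> \<U> \<and> \<Union> (C ` B) \<subseteq> \<Union> \<F>"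
      using open_cover by (intro compactinD) auto
    then obtain \<F> where \<F>: "finite \<F>" "\<F> \<subseteq> \<U>" "\<Union> (C ` B) \<subseteq> \<Union> \<F>"
      by blast
    have "C x \<subseteq> \<Union> (insert V \<F>)"
      using B(3) \<F>(3) by blast
    then show ?thesis
      using V(1) \<F>(1,2) by (intro exI[of _ "insert V \<F>"]) simp
  qed
  show ?case
    unfolding compactin_def topspace_admTop
  proof (intro conjI allI impI Cone_subset)
    fix \<U> assume "(\<forall>U\<in>\<U>. openin T U) \<and> C x \<subseteq> \<Union> \<U>"
    then show "\<exists>\<F>. finite \<F> \<and> \<F> \<subseteq> \<U> \<and> C x \<subseteq> \<Union> \<F>"
      by (elim conjE) (rule finite_subcover)
  qed
qed

abbreviation levels_from :: "'b \<Rightarrow> ('a \<times> 'b) set" where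
  "levels_from \<beta> \<equiv> {z \<in> X. (\<beta>, snd z) \<in> L}"

lemma isolated_by_Cone:
  assumes "x \<in> K \<times> {\<beta>}" "\<beta> \<in> Field L"
  shows "C x \<inter> levels_from \<beta> = {x}"
proof
  show "C x \<inter> levels_from \<beta> \<subseteq> {x}"
  proof
    fix z assume "z \<in> C x \<inter> levels_from \<beta>"
    then have "le z x" "(snd x, snd z) \<in> L"
      using assms(1) by auto
    then show "z \<in> {x}"
      using le_level_eq by blast
  qed
  show "{x} \<subseteq> C x \<inter> levels_from \<beta>"
    using assms le_refl[of x] refl_onD[OF REFL, of \<beta>] by auto
qed

lemma not_isolated_above_level:
  assumes "openin T U" "x \<in> U" "\<beta> \<in> Field L" "(\<beta>, snd x) \<in> L - Id"
  obtains z where "z \<in> U" "z \<in> levels_from \<beta>" "z \<noteq> x"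
proof -
  have x: "x \<in> X"
    using assms(1,2) openin_subset topspace_admTop by blast
  obtain B where B: "finite B" "\<forall>b\<in>B. le b x \<and> b \<noteq> x" "C x - \<Union> (C ` B) \<subseteq> U"
    by (rule open_neighbourhood_contains_punctured_Cone[OF assms(1,2)])
  have "B \<subseteq> X"
    using B(2) le_carrier by blast
  then have D: "finite (insert \<beta> (snd ` B))" "insert \<beta> (snd ` B) \<subseteq> Field L"
    using B(1) assms(3) by auto
  from finite_has_greatest[OF D(1) insert_not_empty D(2)]
  obtain \<delta> where \<delta>: "\<delta> \<in> insert \<beta> (snd ` B)" "\<forall>\<gamma>\<in>insert \<beta> (snd ` B). (\<gamma>, \<delta>) \<in> L"
    by (rule bexE)
  have \<delta>_below: "(\<delta>, snd x) \<in> L - Id"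
  proof (cases "\<delta> = \<beta>")
    case False
    then obtain b where "b \<in> B" "\<delta> = snd b"
      using \<delta>(1) by blast
    then show ?thesis
      using B(2) le_level_less[of b x] by simp
  qed (use assms(4) in simp)
  have "infinite ({\<alpha> \<in> K. le (\<alpha>, \<delta>) x} - fst ` B)"
    using infinite_column_below[of \<delta> "fst x" "snd x"] x \<delta>_below \<delta>(1) D(2) B(1)
    by (intro Diff_infinite_finite) auto
  then obtain \<alpha> where \<alpha>: "\<alpha> \<in> K" "le (\<alpha>, \<delta>) x" "\<alpha> \<notin> fst ` B"
    using infinite_imp_nonempty by blast
  \<comment> \<open>a cone of \<open>B\<close> meets level \<open>\<delta>\<close> at most in its own vertex, since \<open>\<delta>\<close> bounds the levels of \<open>B\<close>\<close>
  have "(\<alpha>, \<delta>) \<notin> \<Union> (C ` B)"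
  proof
    assume "(\<alpha>, \<delta>) \<in> \<Union> (C ` B)"
    then obtain c where c: "c \<in> B" "le (\<alpha>, \<delta>) c" by auto
    then have "(\<alpha>, \<delta>) = c"
      using le_level_eq[OF c(2)] \<delta>(2) by simp
    then show False
      using c(1) \<alpha>(3) by force
  qed
  then have "(\<alpha>, \<delta>) \<in> U"
    using B(3) \<alpha>(2) by auto
  moreover have "(\<alpha>, \<delta>) \<in> levels_from \<beta>"
    using le_carrier[OF \<alpha>(2)] \<delta>(2) by simp
  moreover have "(\<alpha>, \<delta>) \<noteq> x"
    using \<delta>_below by auto
  ultimately show thesis by (rule that)
qed

lemma isolated_pts_levels_from:
  assumes "\<beta> \<in> Field L"
  shows "isolated_pts T (levels_from \<beta>) = K \<times> {\<beta>}"
proof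
  show "K \<times> {\<beta>} \<subseteq> isolated_pts T (levels_from \<beta>)"
  proof
    fix x assume x: "x \<in> K \<times> {\<beta>}"
    then have "x \<in> X"
      using assms by auto
    then show "x \<in> isolated_pts T (levels_from \<beta>)"
      using openin_Cone[of x] isolated_by_Cone[OF x assms]
      unfolding isolated_pts_def by blast
  qed
next
  show "isolated_pts T (levels_from \<beta>) \<subseteq> K \<times> {\<beta>}"
  proof
    fix x assume "x \<in> isolated_pts T (levels_from \<beta>)"
    then obtain U where x: "x \<in> levels_from \<beta>" and U: "openin T U" "U \<inter> levels_from \<beta> = {x}"
      unfolding isolated_pts_def by blast
    have "snd x = \<beta>"
    proof (rule ccontr)
      assume "snd x \<noteq> \<beta>"
      with x have "(\<beta>, snd x) \<in> L - Id" by auto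
      moreover have "x \<in> U"
        using U(2) by blast
      ultimately obtain z where "z \<in> U" "z \<in> levels_from \<beta>" "z \<noteq> x"
        using not_isolated_above_level[OF U(1) _ assms] by blast
      then show False
        using U(2) by blast
    qed
    then show "x \<in> K \<times> {\<beta>}"
      using x by (cases x) auto
  qed
qed

lemma CB_level_admTop: "\<beta> \<in> Field L \<Longrightarrow> CB_level T L \<beta> = K \<times> {\<beta>}"
  using WF
proof (induction \<beta> rule: wf_induct_rule)
  case (less \<beta>)
  have "CB_level T L ` underS \<beta> = (\<lambda>\<gamma>. K \<times> {\<gamma>}) ` underS \<beta>"
    using less.IH by (intro image_cong) (auto simp: underS_def intro: FieldI1)
  then have "\<Union> (CB_level T L ` underS \<beta>) = K \<times> underS \<beta>"
    by auto
  then have "topspace T - \<Union> (CB_level T L ` underS \<beta>) = levels_from \<beta>"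
    using mem_underS_iff[OF less.prems] by (auto simp: topspace_admTop)
  then have "CB_level T L \<beta> = isolated_pts T (levels_from \<beta>)"
    by (subst CB_level_unfold) simp
  also have "\<dots> = K \<times> {\<beta>}"
    by (rule isolated_pts_levels_from[OF less.prems])
  finally show ?case .
qed

end

theorem mainTheorem2:
  fixes K :: "'a set" and L :: "'b rel"
    and le :: "('a \<times> 'b) \<Rightarrow> ('a \<times> 'b) \<Rightarrow> bool"
  assumes "infinite K"
    and "Card_order L"
    and "(L, cardSuc (cardSuc (card_of K))) \<in> ordIso"
    and "admissible K L le"
  shows "Hausdorff_space (admTop K L le)
    \<and> (\<forall>x \<in> K \<times> Field L. compactin (admTop K L le) (Cone K L le x))
    \<and> (\<forall>\<beta> \<in> Field L. CB_level (admTop K L le) L \<beta> = K \<times> {\<beta>})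
    \<and> topspace (admTop K L le) = (\<Union>\<beta> \<in> Field L. CB_level (admTop K L le) L \<beta>)"
proof -
  interpret admissible_poset L K le
    using card_order_on_well_order_on[OF assms(2)] assms(4) by (rule admissible_poset_if_admissible)
  have "(\<Union>\<beta> \<in> Field L. CB_level T L \<beta>) = K \<times> Field L"
    by (auto simp: CB_level_admTop)
  then show ?thesis
    by (simp add: Hausdorff_admTop compactin_Cone CB_level_admTop topspace_admTop)
qed

end
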